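(* Let $E$ be a finite set, $\mathcal{W}\subseteq\{+,-,0\}^E$ an affine oriented matroid, and $X,Y\in\mathcal{W}$ with $\underline{X}=\underline{Y}$, $X\neq -Y$ and $I(X,-Y)\cap\mathcal{W}=\emptyset$. Then $B(X,-Y)\cap\mathcal{W}=\emptyset$.
   Context: For $X\in\{+,-,0\}^E$: support $\underline{X}=\{e:X_e\neq0\}$; $(-X)_e=-X_e$; composition $(X\circ Y)_e=X_e$ if $X_e\neq0$, else $Y_e$; $S(X,Y)=\{e: X_e,Y_e\neq0, X_e\neq Y_e\}$. An oriented matroid on $F$ is $\mathcal{O}\subseteq\{+,-,0\}^F$ with: (O1) zero vector in $\mathcal{O}$; (O2) $X\in\mathcal{O}\Rightarrow -X\in\mathcal{O}$; (O3) $X,Y\in\mathcal{O}\Rightarrow X\circ Y\in\mathcal{O}$; (O4) if $X,Y\in\mathcal{O}$, $\underline{X}=\underline{Y}$, $e\in S(X,Y)$, there is $Z\in\mathcal{O}$ with $Z_e=0$ and $Z_f=(X\circ Y)_f=(Y\circ X)_f$ for all $f\notin S(X,Y)$. $\mathcal{W}\subseteq\{+,-,0\}^E$ is an affine oriented matroid if there exist $g\notin E$ and an oriented matroid $\mathcal{O}$ on $E\cup\{g\}$ with $\mathcal{W}=\{X|_E: X\in\mathcal{O}, X_g=+\}$. For $X,Y$ with $\underline{X}=\underline{Y}$ and $X\neq Y$: $I_e(X,Y)=\{V : \underline{V}\subseteq\underline{X}\setminus\{e\}, V_f=X_f\ \forall f\notin S(X,Y)\}$ for $e\in S(X,Y)$,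 $I(X,Y)=\bigcup_{e\in S(X,Y)}I_e(X,Y)$, and $B(X,Y)=\{V\in\{+,-,0\}^E: V\notin\{X,Y\}, \underline{V}=\underline{X}, V_f=X_f\ \forall f\notin S(X,Y)\}$. *)

theory Defs
  imports Main
begin

datatype sign = Pos | Neg | Zero

definition sv :: "'a set \<Rightarrow> ('a \<Rightarrow> sign) set" where
  "sv F = {X. \<forall>e. e \<notin> F \<longrightarrow> X e = Zero}"

definition supp :: "('a \<Rightarrow> sign) \<Rightarrow> 'a set" where
  "supp X = {e. X e \<noteq> Zero}"

fun sneg :: "sign \<Rightarrow> sign" where
  "sneg Pos = Neg" | "sneg Neg = Pos" | "sneg Zero = Zero"

definition vneg :: "('a \<Rightarrow> sign) \<Rightarrow> ('a \<Rightarrow> sign)" where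
  "vneg X = (\<lambda>e. sneg (X e))"

definition svcomp :: "('a \<Rightarrow> sign) \<Rightarrow> ('a \<Rightarrow> sign) \<Rightarrow> ('a \<Rightarrow> sign)" where
  "svcomp X Y = (\<lambda>e. if X e \<noteq> Zero then X e else Y e)"

definition sep :: "('a \<Rightarrow> sign) \<Rightarrow> ('a \<Rightarrow> sign) \<Rightarrow> 'a set" where
  "sep X Y = {e. X e \<noteq> Zero \<and> Y e \<noteq> Zero \<and> X e \<noteq> Y e}"

definition oriented_matroid :: "'a set \<Rightarrow> ('a \<Rightarrow> sign) set \<Rightarrow> bool" where
  "oriented_matroid F Om \<longleftrightarrow>
     Om \<subseteq> sv F \<and>
     (\<lambda>_. Zero) \<in> Om \<and>
     (\<forall>X\<in>Om. vneg X \<in> Om) \<and>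
     (\<forall>X\<in>Om. \<forall>Y\<in>Om. svcomp X Y \<in> Om) \<and>
     (\<forall>X\<in>Om. \<forall>Y\<in>Om. \<forall>e. supp X = supp Y \<and> e \<in> sep X Y \<longrightarrow>
        (\<exists>Z\<in>Om. Z e = Zero \<and>
           (\<forall>f. f \<notin> sep X Y \<longrightarrow> Z f = svcomp X Y f \<and> Z f = svcomp Y X f)))"

definition restr :: "'a set \<Rightarrow> ('a \<Rightarrow> sign) \<Rightarrow> ('a \<Rightarrow> sign)" where
  "restr E X = (\<lambda>e. if e \<in> E then X e else Zero)"

definition affine_oriented_matroid :: "'a set \<Rightarrow> ('a \<Rightarrow> sign) set \<Rightarrow> bool" where
  "affine_oriented_matroid E W \<longleftrightarrow>
     (\<exists>g Om. g \<notin> E \<and> oriented_matroid (insert g E) Om \<and>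
        W = {restr E X | X. X \<in> Om \<and> X g = Pos})"

definition I_e :: "'a set \<Rightarrow> ('a \<Rightarrow> sign) \<Rightarrow> ('a \<Rightarrow> sign) \<Rightarrow> 'a \<Rightarrow> ('a \<Rightarrow> sign) set" where
  "I_e E X Y e = {V \<in> sv E. supp V \<subseteq> supp X - {e} \<and> (\<forall>f. f \<notin> sep X Y \<longrightarrow> V f = X f)}"

definition I_set :: "'a set \<Rightarrow> ('a \<Rightarrow> sign) \<Rightarrow> ('a \<Rightarrow> sign) \<Rightarrow> ('a \<Rightarrow> sign) set" where
  "I_set E X Y = (\<Union>e\<in>sep X Y. I_e E X Y e)"

definition B_set :: "'a set \<Rightarrow> ('a \<Rightarrow> sign) \<Rightarrow> ('a \<Rightarrow> sign) \<Rightarrow> ('a \<Rightarrow> sign) set" where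
  "B_set E X Y = {V \<in> sv E. V \<notin> {X, Y} \<and> supp V = supp X \<and> (\<forall>f. f \<notin> sep X Y \<longrightarrow> V f = X f)}"

end

theory Submission
  imports Defs
begin

text \<open>If some \<open>V \<in> B(X,-Y)\<close> lay in \<open>\<W>\<close>, then \<open>V\<close> and \<open>X\<close> have the same support and differ at some
  \<open>e \<in> S(X,-Y)\<close>. Eliminating \<open>e\<close> between lifts of \<open>X\<close> and \<open>V\<close> in the oriented matroid
  \<open>\<O>\<close> on \<open>E \<union> {g}\<close> keeps the \<open>g\<close>-entry \<open>+\<close>, because \<open>g\<close> does not separate the lifts;
  so the result restricts to an element of \<open>\<W>\<close>, and it lies in \<open>I\<^sub>e(X,-Y)\<close>.\<close>

lemma sep_restr:
  "f \<in> E \<Longrightarrow> f \<in> sep (restr E X) (restr E Y) \<longleftrightarrow> f \<in> sep X Y"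
  unfolding sep_def restr_def by simp

lemma svcomp_eq_if_supp_eq:
  assumes "supp X = supp Y" and "f \<notin> sep X Y"
  shows "svcomp X Y f = X f"
proof -
  have "X f = Zero \<longleftrightarrow> Y f = Zero"
    using assms(1) unfolding supp_def by blast
  then show ?thesis
    using assms(2) unfolding sep_def svcomp_def by auto
qed

lemma sep_subset_supp: "sep X Y \<subseteq> supp X"
  unfolding sep_def supp_def by blast

lemma oriented_matroid_elimination:
  assumes "oriented_matroid F Om" and "X \<in> Om" and "Y \<in> Om"
    and "supp X = supp Y" and "e \<in> sep X Y"
  obtains Z where "Z \<in> Om" and "Z e = Zero" and "\<And>f. f \<notin> sep X Y \<Longrightarrow> Z f = svcomp X Y f"
proof -
  have "\<exists>Z\<in>Om. Z e = Zero \<and> (\<forall>f. f \<notin> sep X Y \<longrightarrow> Z f = svcomp X Y f \<and> Z f = svcomp Y X f)"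
    using assms unfolding oriented_matroid_def by blast
  then show thesis using that by blast
qed

lemma affine_oriented_matroid_subset_sv:
  "affine_oriented_matroid E W \<Longrightarrow> W \<subseteq> sv E"
  unfolding affine_oriented_matroid_def sv_def restr_def by auto

lemma supp_eq_if_restr_supp_eq:
  assumes "Xh \<in> sv (insert g E)" and "Vh \<in> sv (insert g E)"
    and "Xh g = Pos" and "Vh g = Pos"
    and "supp (restr E Xh) = supp (restr E Vh)"
  shows "supp Xh = supp Vh"
proof -
  have "Xh f = Zero \<longleftrightarrow> Vh f = Zero" for f
  proof -
    consider "f \<in> E" | "f = g" | "f \<notin> insert g E" by blast
    then show ?thesis
    proof cases
      case 1
      have "restr E Xh f = Zero \<longleftrightarrow> restr E Vh f = Zero"
        using assms(5) unfolding supp_def by blast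
      with 1 show ?thesis unfolding restr_def by simp
    next
      case 2
      with assms(3,4) show ?thesis by simp
    next
      case 3
      with assms(1,2) show ?thesis unfolding sv_def by blast
    qed
  qed
  then show ?thesis unfolding supp_def by blast
qed

text \<open>For equal supports both compositions in (O4) agree with \<open>X\<close> off \<open>S(X,V)\<close>.\<close>

lemma affine_oriented_matroid_elimination:
  assumes aom: "affine_oriented_matroid E W"
    and "X \<in> W" and "V \<in> W"
    and supp_XV: "supp X = supp V"
    and e: "e \<in> sep X V"
  obtains Z where "Z \<in> W" and "Z e = Zero" and "\<And>f. f \<notin> sep X V \<Longrightarrow> Z f = X f"
proof -
  from aom obtain g Om where om: "oriented_matroid (insert g E) Om"
    and W_def: "W = {restr E X | X. X \<in> Om \<and> X g = Pos}"
    unfolding affine_oriented_matroid_def by blast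
  obtain Xh where Xh: "Xh \<in> Om" "Xh g = Pos" and X_def: "X = restr E Xh"
    using \<open>X \<in> W\<close> W_def by blast
  obtain Vh where Vh: "Vh \<in> Om" "Vh g = Pos" and V_def: "V = restr E Vh"
    using \<open>V \<in> W\<close> W_def by blast
  have Om_sv: "Om \<subseteq> sv (insert g E)"
    using om unfolding oriented_matroid_def by blast
  then have "Xh \<in> sv (insert g E)" and "Vh \<in> sv (insert g E)"
    using Xh(1) Vh(1) by blast+
  then have supp_h: "supp Xh = supp Vh"
    using Xh(2) Vh(2) supp_XV unfolding X_def V_def by (rule supp_eq_if_restr_supp_eq)
  have "X e \<noteq> Zero"
    using e unfolding sep_def by blast
  then have "e \<in> E"
    unfolding X_def restr_def by (cases "e \<in> E") auto
  then have e_h: "e \<in> sep Xh Vh"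
    using e sep_restr[of e E Xh Vh] unfolding X_def V_def by blast
  obtain Zh where Zh: "Zh \<in> Om" "Zh e = Zero"
    and Zh_off: "\<And>f. f \<notin> sep Xh Vh \<Longrightarrow> Zh f = svcomp Xh Vh f"
    using oriented_matroid_elimination[OF om Xh(1) Vh(1) supp_h e_h] by blast
  have "g \<notin> sep Xh Vh"
    using Xh(2) Vh(2) unfolding sep_def by simp
  then have "Zh g = Pos"
    using Zh_off Xh(2) unfolding svcomp_def by simp
  show thesis
  proof
    show "restr E Zh \<in> W" using W_def Zh(1) \<open>Zh g = Pos\<close> by blast
    show "restr E Zh e = Zero" using Zh(2) unfolding restr_def by simp
  next
    fix f assume f: "f \<notin> sep X V"
    show "restr E Zh f = X f"
    proof (cases "f \<in> E")
      case True
      with f have "f \<notin> sep Xh Vh"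
        using sep_restr[of f E Xh Vh] unfolding X_def V_def by blast
      with True show ?thesis
        using Zh_off svcomp_eq_if_supp_eq[OF supp_h] unfolding X_def restr_def by simp
    next
      case False
      then show ?thesis unfolding X_def restr_def by simp
    qed
  qed
qed

lemma affine_oriented_matroid_I_e_of_B_set:
  assumes aom: "affine_oriented_matroid E W"
    and "X \<in> W" and "V \<in> W" and V: "V \<in> B_set E X Y"
  obtains e Z where "e \<in> sep X Y" and "Z \<in> W" and "Z \<in> I_e E X Y e"
proof -
  have "V \<noteq> X" and supp_V: "supp V = supp X" and agree: "\<And>f. f \<notin> sep X Y \<Longrightarrow> V f = X f"
    using V unfolding B_set_def by auto
  then obtain e where "V e \<noteq> X e" by blast
  then have "e \<in> sep X Y" using agree by blast
  have "X e \<noteq> Zero"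
    using \<open>e \<in> sep X Y\<close> unfolding sep_def by blast
  moreover from this have "V e \<noteq> Zero"
    using supp_V unfolding supp_def by blast
  ultimately have "e \<in> sep X V"
    using \<open>V e \<noteq> X e\<close> unfolding sep_def by simp
  then obtain Z where "Z \<in> W" and Z_e: "Z e = Zero" and Z_off: "\<And>f. f \<notin> sep X V \<Longrightarrow> Z f = X f"
    using affine_oriented_matroid_elimination[OF aom \<open>X \<in> W\<close> \<open>V \<in> W\<close> supp_V[symmetric]] by blast
  have "supp Z \<subseteq> supp X - {e}"
  proof
    fix f assume "f \<in> supp Z"
    then have "Z f \<noteq> Zero" unfolding supp_def by blast
    then have "f \<in> supp X"
      using Z_off sep_subset_supp[of X V] unfolding supp_def by (cases "f \<in> sep X V") auto
    moreover have "f \<noteq> e" using Z_e \<open>Z f \<noteq> Zero\<close> by blast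
    ultimately show "f \<in> supp X - {e}" by blast
  qed
  moreover have "Z f = X f" if "f \<notin> sep X Y" for f
  proof -
    have "f \<notin> sep X V"
      using agree[OF that] unfolding sep_def by simp
    then show ?thesis by (rule Z_off)
  qed
  moreover have "Z \<in> sv E"
    using affine_oriented_matroid_subset_sv[OF aom] \<open>Z \<in> W\<close> by blast
  ultimately have "Z \<in> I_e E X Y e"
    unfolding I_e_def by blast
  with \<open>e \<in> sep X Y\<close> \<open>Z \<in> W\<close> show thesis ..
qed

theorem lemma2p3:
  fixes E :: "'a set" and W :: "('a \<Rightarrow> sign) set" and X Y :: "'a \<Rightarrow> sign"
  assumes "finite E"
    and "affine_oriented_matroid E W"
    and "X \<in> W" and "Y \<in> W"
    and "supp X = supp Y"
    and "X \<noteq> vneg Y"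
    and "I_set E X (vneg Y) \<inter> W = {}"
  shows "B_set E X (vneg Y) \<inter> W = {}"
proof (rule ccontr)
  assume "B_set E X (vneg Y) \<inter> W \<noteq> {}"
  then obtain V where "V \<in> B_set E X (vneg Y)" and "V \<in> W" by blast
  then obtain e Z where "e \<in> sep X (vneg Y)" "Z \<in> W" "Z \<in> I_e E X (vneg Y) e"
    using affine_oriented_matroid_I_e_of_B_set assms(2,3) by blast
  then have "Z \<in> I_set E X (vneg Y) \<inter> W"
    unfolding I_set_def by blast
  with assms(7) show False by blast
qed

end
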